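(* Let $\{H(\theta)\}_{\theta\in[0,s]}$ be a differentiable family of self-adjoint operators on a finite-dimensional Hilbert space such that each $H(\theta)$ has a unique ground state and spectral gap $\Delta(\theta)\ge\Delta>0$. Let $\Psi_0(\theta)$ be the differentiable family of normalized ground states satisfying the parallel transport condition $\langle\Psi_0(\theta)|\partial_\theta\Psi_0(\theta)\rangle=0$. Let $U_\Delta(\theta)$ solve $\partial_\theta U_\Delta(\theta)=i\,\mathcal S_\Delta(H(\theta),\partial_\theta H(\theta))\,U_\Delta(\theta)$, $U_\Delta(0)=\mathbb 1$. Then $\Psi_0(\theta)=U_\Delta(\theta)\Psi_0(0)$ for all $\theta\in[0,s]$.
   Context: Filter function: for $\Delta>0$, $W_\Delta:\mathbb R\to\mathbb R$ is a fixed function, continuous except at $t=0$ (where it is right-continuous with $W_\Delta(0)=1/2=\|W_\Delta\|_\infty$), odd away from $t=0$, with $\|W_\Delta\|_1\le K/\Delta$ for a constant $K$, decaying like $\exp(-c_0\Delta|t|/\ln^2(\Delta|t|))$, and whose Fourier transform $\hat W_\Delta(\lambda)=\int_{\mathbb R}W_\Delta(t)e^{i\lambda t}dt$ equals $i/\lambda$ for all $|\lambda|\ge\Delta$. For self-adjoint $H$ and an operator $A$, $\mathcal S_\Delta(H,A)=\int_{\mathbb R}W_\Delta(t)\,e^{itH}Ae^{-itH}\,dt$. *)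

theory Defs
  imports "HOL-Analysis.Analysis"
begin

definition cinner :: "complex ^ 'n \<Rightarrow> complex ^ 'n \<Rightarrow> complex" where
  "cinner x y = (\<Sum>i\<in>UNIV. cnj (x $ i) * y $ i)"

definition cnorm :: "complex ^ 'n \<Rightarrow> real" where
  "cnorm x = sqrt (Re (cinner x x))"

definition adjoint_mat :: "complex ^ 'n ^ 'n \<Rightarrow> complex ^ 'n ^ 'n" where
  "adjoint_mat A = (\<chi> i j. cnj (A $ j $ i))"

definition self_adjoint :: "complex ^ 'n ^ 'n \<Rightarrow> bool" where
  "self_adjoint A \<longleftrightarrow> adjoint_mat A = A"

definition cscale_mat :: "complex \<Rightarrow> complex ^ 'n ^ 'n \<Rightarrow> complex ^ 'n ^ 'n" where
  "cscale_mat c A = (\<chi> i j. c * A $ i $ j)"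

primrec mat_pow :: "complex ^ 'n ^ 'n \<Rightarrow> nat \<Rightarrow> complex ^ 'n ^ 'n" where
  "mat_pow A 0 = mat 1"
| "mat_pow A (Suc k) = A ** mat_pow A k"

definition mat_exp :: "complex ^ 'n ^ 'n \<Rightarrow> complex ^ 'n ^ 'n" where
  "mat_exp A = (\<Sum>k. (1 / fact k) *\<^sub>R mat_pow A k)"

definition is_eigenvalue :: "complex ^ 'n ^ 'n \<Rightarrow> complex \<Rightarrow> bool" where
  "is_eigenvalue H \<mu> \<longleftrightarrow> (\<exists>v. v \<noteq> 0 \<and> H *v v = \<mu> *s v)"

definition unique_ground_state_gap :: "complex ^ 'n ^ 'n \<Rightarrow> real \<Rightarrow> real \<Rightarrow> bool" where
  "unique_ground_state_gap H E0 \<Delta> \<longleftrightarrow>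
     is_eigenvalue H (complex_of_real E0) \<and>
     (\<exists>\<psi>. \<forall>v. H *v v = complex_of_real E0 *s v \<longrightarrow> (\<exists>c. v = c *s \<psi>)) \<and>
     (\<forall>\<mu>. is_eigenvalue H \<mu> \<longrightarrow> \<mu> \<noteq> complex_of_real E0 \<longrightarrow>
          \<mu> \<in> \<real> \<and> E0 + \<Delta> \<le> Re \<mu>)"

definition normalized_ground_state :: "complex ^ 'n ^ 'n \<Rightarrow> complex ^ 'n \<Rightarrow> bool" where
  "normalized_ground_state H \<psi> \<longleftrightarrow> cnorm \<psi> = 1 \<and>
     (\<exists>E0::real. H *v \<psi> = complex_of_real E0 *s \<psi> \<and>
        (\<forall>\<mu>. is_eigenvalue H \<mu> \<longrightarrow> \<mu> \<in> \<real> \<and> E0 \<le> Re \<mu>))"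

definition filter_function :: "real \<Rightarrow> real \<Rightarrow> real \<Rightarrow> (real \<Rightarrow> real) \<Rightarrow> bool" where
  "filter_function K c0 \<Delta> W \<longleftrightarrow>
     (\<forall>t. t \<noteq> 0 \<longrightarrow> isCont W t) \<and>
     continuous (at_right 0) W \<and>
     W 0 = 1/2 \<and> (\<forall>t. \<bar>W t\<bar> \<le> 1/2) \<and>
     (\<forall>t. t \<noteq> 0 \<longrightarrow> W (- t) = - W t) \<and>
     integrable lborel W \<and> (\<integral>t. \<bar>W t\<bar> \<partial>lborel) \<le> K / \<Delta> \<and>
     c0 > 0 \<and>
     (\<exists>C. \<forall>t. \<Delta> * \<bar>t\<bar> \<ge> 2 \<longrightarrow>
          \<bar>W t\<bar> \<le> C * exp (- c0 * \<Delta> * \<bar>t\<bar> / (ln (\<Delta> * \<bar>t\<bar>))\<^sup>2)) \<and>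
     (\<forall>\<mu>. \<bar>\<mu>\<bar> \<ge> \<Delta> \<longrightarrow>
          (\<integral>t. complex_of_real (W t) * exp (\<i> * complex_of_real (\<mu> * t)) \<partial>lborel)
            = \<i> / complex_of_real \<mu>)"

definition S_filter :: "(real \<Rightarrow> real) \<Rightarrow> complex ^ 'n ^ 'n \<Rightarrow> complex ^ 'n ^ 'n \<Rightarrow> complex ^ 'n ^ 'n" where
  "S_filter W H A = (\<integral>t. W t *\<^sub>R
      (mat_exp (cscale_mat (\<i> * complex_of_real t) H) ** A **
       mat_exp (cscale_mat (- \<i> * complex_of_real t) H)) \<partial>lborel)"

end

theory Submission
  imports Defs
begin

text \<open>Differentiating \<open>H \<Psi>\<^sub>0 = E\<^sub>0 \<Psi>\<^sub>0\<close> gives \<open>(\<partial>H) \<Psi>\<^sub>0 = e \<Psi>\<^sub>0 - (H - E\<^sub>0) \<Psi>\<^sub>0'\<close>.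
  Expanding in an eigenbasis of \<open>H\<close>, \<open>\<S>\<^sub>\<Delta>(H, A) \<Psi>\<^sub>0 = \<hat>W(H - E\<^sub>0) A \<Psi>\<^sub>0\<close>; as \<open>W\<close> is odd,
  \<open>\<hat>W(0) = 0\<close>, and on the rest of the spectrum \<open>\<hat>W(\<lambda>) = \<i>/\<lambda>\<close> by the gap, so
  \<open>\<i> \<S>\<^sub>\<Delta>(H, \<partial>H) \<Psi>\<^sub>0\<close> is the part of \<open>\<Psi>\<^sub>0'\<close> orthogonal to \<open>\<Psi>\<^sub>0\<close>, which is all of \<open>\<Psi>\<^sub>0'\<close>
  by parallel transport. Hence \<open>\<Psi>\<^sub>0\<close> and \<open>U\<^sub>\<Delta> \<Psi>\<^sub>0(0)\<close> solve the same linear equation. Its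
  generator is skew-adjoint because \<open>\<S>\<^sub>\<Delta>(H, \<partial>H)\<close> is self-adjoint, so the norm of the difference
  of the two solutions is constant, hence zero.\<close>

lemma scaleR_complex_eq_of_real_mult: "r *\<^sub>R (z::complex) = of_real r * z"
  by (simp add: scaleR_conv_of_real)

lemma vector_scaleR_eq_of_real_smult: "r *\<^sub>R (v::complex ^ 'n) = complex_of_real r *s v"
  by (simp add: vec_eq_iff vector_scaleR_component scaleR_complex_eq_of_real_mult)

lemma vector_smult_scaleR_commute: "a *s (r *\<^sub>R (v::complex ^ 'n)) = r *\<^sub>R (a *s v)"
  by (simp add: vec_eq_iff vector_scaleR_component scaleR_complex_eq_of_real_mult mult.left_commute)

lemma vector_smult_assoc: "a *s (b *s (v::complex ^ 'n)) = (a * b) *s v"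
  by (simp add: vec_eq_iff mult.assoc)

lemma cscale_mat_mult_vector: "cscale_mat c A *v v = c *s (A *v v)"
  by (simp add: vec_eq_iff matrix_vector_mult_def sum_distrib_left cscale_mat_def algebra_simps)

lemma cinner_add_left: "cinner (x + y) z = cinner x z + cinner y z"
  and cinner_add_right: "cinner x (y + z) = cinner x y + cinner x z"
  and cinner_diff_right: "cinner x (y - z) = cinner x y - cinner x z"
  and cinner_smult_left: "cinner (c *s x) y = cnj c * cinner x y"
  and cinner_smult_right: "cinner x (c *s y) = c * cinner x y"
  and cinner_zero_left [simp]: "cinner 0 x = 0"
  and cinner_zero_right [simp]: "cinner x 0 = 0"
  by (simp_all add: cinner_def sum.distrib sum_subtractf sum_distrib_left algebra_simps)

lemma cinner_scaleR_left: "cinner (r *\<^sub>R x) y = of_real r * cinner x y"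
  and cinner_scaleR_right: "cinner x (r *\<^sub>R y) = of_real r * cinner x y"
  by (simp_all add: vector_scaleR_eq_of_real_smult cinner_smult_left cinner_smult_right)

lemma cinner_commute: "cnj (cinner x y) = cinner y x"
  by (simp add: cinner_def mult.commute)

lemma inner_eq_Re_cinner: "x \<bullet> y = Re (cinner x y)"
  by (simp add: cinner_def inner_vec_def Re_sum inner_complex_def)

lemma cinner_self: "cinner x x = of_real ((norm x)\<^sup>2)"
proof -
  have "cinner x x = (\<Sum>i\<in>UNIV. of_real ((cmod (x $ i))\<^sup>2))"
    unfolding cinner_def
    by (rule sum.cong) (auto simp: complex_norm_square[symmetric] mult.commute)
  then show ?thesis
    by (simp add: norm_vec_def L2_set_def sum_nonneg)
qed

lemma cnorm_eq_norm: "cnorm x = norm x"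
  by (simp add: cnorm_def cinner_self)

lemma cinner_matrix_vector_right: "cinner x (A *v y) = cinner (adjoint_mat A *v x) y"
  by (simp add: cinner_def matrix_vector_mult_def adjoint_mat_def sum_distrib_left
      sum_distrib_right algebra_simps) (rule sum.swap)

lemma self_adjoint_cinner: "self_adjoint H \<Longrightarrow> cinner x (H *v y) = cinner (H *v x) y"
  by (simp add: cinner_matrix_vector_right self_adjoint_def)

lemma bounded_bilinear_cinner: "bounded_bilinear cinner"
  unfolding bilinear_conv_bounded_bilinear[symmetric] bilinear_def
  by (auto intro!: linearI simp: cinner_add_left cinner_add_right cinner_scaleR_left
      cinner_scaleR_right scaleR_complex_eq_of_real_mult)

lemma bounded_bilinear_vector_smult: "bounded_bilinear (\<lambda>(c::complex) (v::complex ^ 'n). c *s v)"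
  unfolding bilinear_conv_bounded_bilinear[symmetric] bilinear_def
  by (auto intro!: linearI simp: vec_eq_iff algebra_simps vector_scaleR_component
      scaleR_complex_eq_of_real_mult)

lemma bounded_bilinear_matrix_vector_mult:
  "bounded_bilinear (\<lambda>(A::complex ^ 'n ^ 'm) (v::complex ^ 'n). A *v v)"
  unfolding bilinear_conv_bounded_bilinear[symmetric] bilinear_def
  by (auto intro!: linearI simp: vec_eq_iff matrix_vector_mult_def sum.distrib algebra_simps
      vector_scaleR_component scaleR_complex_eq_of_real_mult sum_distrib_left)

lemma bounded_bilinear_matrix_matrix_mult:
  "bounded_bilinear (\<lambda>(A::complex ^ 'n ^ 'm) (B::complex ^ 'k ^ 'n). A ** B)"
  unfolding bilinear_conv_bounded_bilinear[symmetric] bilinear_def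
  by (auto intro!: linearI simp: vec_eq_iff matrix_matrix_mult_def sum.distrib algebra_simps
      vector_scaleR_component scaleR_complex_eq_of_real_mult sum_distrib_left)

lemma bounded_linear_adjoint_mat: "bounded_linear adjoint_mat"
  unfolding linear_conv_bounded_linear[symmetric]
  by (auto intro!: linearI simp: vec_eq_iff adjoint_mat_def vector_scaleR_component
      scaleR_complex_eq_of_real_mult)

lemmas bounded_linear_matrix_vector_mult_left =
  bounded_bilinear.bounded_linear_left[OF bounded_bilinear_matrix_vector_mult]

section \<open>The matrix exponential\<close>

lemma mat_pow_eigenvector:
  assumes "X *v v = c *s v"
  shows "mat_pow X k *v v = c ^ k *s v"
  by (induction k) (simp_all add: matrix_vector_mul_lid flip: matrix_vector_mul_assoc
      add: assms vector_scalar_commute vector_smult_assoc mult.commute)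

lemma norm_mat_pow_le:
  fixes X :: "complex ^ 'n ^ 'n"
  assumes K: "\<And>(A::complex ^ 'n ^ 'n) (B::complex ^ 'n ^ 'n). norm (A ** B) \<le> norm A * norm B * K" and "K > 0"
  shows "norm (mat_pow X k) \<le> norm (mat 1 :: complex ^ 'n ^ 'n) * (K * norm X) ^ k"
proof (induction k)
  case (Suc k)
  have "norm (mat_pow X (Suc k)) \<le> norm X * norm (mat_pow X k) * K"
    using K[of X "mat_pow X k"] by simp
  also have "\<dots> \<le> norm X * (norm (mat 1 :: complex ^ 'n ^ 'n) * (K * norm X) ^ k) * K"
    using Suc \<open>K > 0\<close> by (intro mult_right_mono mult_left_mono) auto
  finally show ?case
    by (simp add: algebra_simps)
qed simp

lemma summable_mat_exp: "summable (\<lambda>k. (1 / fact k) *\<^sub>R mat_pow (X::complex ^ 'n ^ 'n) k)"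
proof -
  obtain K where K: "\<And>(A::complex ^ 'n ^ 'n) (B::complex ^ 'n ^ 'n). norm (A ** B) \<le> norm A * norm B * K" and "K > 0"
    using bounded_bilinear.pos_bounded[OF bounded_bilinear_matrix_matrix_mult] by blast
  let ?c = "norm (mat 1 :: complex ^ 'n ^ 'n)"
  show ?thesis
  proof (rule summable_comparison_test)
    show "summable (\<lambda>k. ?c * (inverse (fact k) * (K * norm X) ^ k))"
      by (intro summable_mult summable_exp)
    have "norm ((1 / fact k) *\<^sub>R mat_pow X k) \<le> ?c * (inverse (fact k) * (K * norm X) ^ k)"
      for k :: nat
      using mult_left_mono[OF norm_mat_pow_le[OF K \<open>K > 0\<close>], of "inverse (fact k)" X k]
      by (simp add: divide_inverse algebra_simps)
    then show "\<exists>N. \<forall>k\<ge>N. norm ((1 / fact k) *\<^sub>R mat_pow X k)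
        \<le> ?c * (inverse (fact k) * (K * norm X) ^ k)"
      by blast
  qed
qed

lemma mat_exp_eigenvector:
  assumes "X *v v = c *s v"
  shows "mat_exp X *v v = exp c *s v"
proof -
  have "mat_exp X *v v = (\<Sum>k. ((1 / fact k) *\<^sub>R mat_pow X k) *v v)"
    unfolding mat_exp_def
    by (rule bounded_linear.suminf[OF bounded_linear_matrix_vector_mult_left summable_mat_exp])
  also have "\<dots> = (\<Sum>k. (c ^ k /\<^sub>R fact k) *s v)"
    by (rule suminf_cong)
      (simp add: linear_scale[OF bounded_linear.linear[OF bounded_linear_matrix_vector_mult_left]]
        mat_pow_eigenvector[OF assms] vector_scaleR_eq_of_real_smult vector_smult_assoc
        scaleR_complex_eq_of_real_mult divide_inverse)
  also have "\<dots> = exp c *s v"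
    unfolding exp_def
    by (rule bounded_linear.suminf[OF bounded_bilinear.bounded_linear_left[OF
          bounded_bilinear_vector_smult] summable_exp_generic, symmetric])
  finally show ?thesis .
qed

lemma mat_exp_cscale_eigenvector:
  assumes "H *v v = c *s v"
  shows "mat_exp (cscale_mat a H) *v v = exp (a * c) *s v"
  by (rule mat_exp_eigenvector) (simp add: cscale_mat_mult_vector assms vector_smult_assoc)

lemma adjoint_mat_mult: "adjoint_mat (A ** B) = adjoint_mat B ** adjoint_mat A"
  by (simp add: vec_eq_iff adjoint_mat_def matrix_matrix_mult_def mult.commute)

lemma mat_pow_Suc_right: "mat_pow A (Suc k) = mat_pow A k ** A"
  by (induction k) (simp_all add: matrix_mul_lid matrix_mul_rid matrix_mul_assoc)

lemma adjoint_mat_pow: "adjoint_mat (mat_pow A k) = mat_pow (adjoint_mat A) k"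
proof (induction k)
  case 0
  show ?case
    by (simp add: vec_eq_iff adjoint_mat_def mat_def)
next
  case (Suc k)
  then show ?case
    unfolding mat_pow_Suc_right[of A] by (simp add: adjoint_mat_mult)
qed

lemma adjoint_mat_exp: "adjoint_mat (mat_exp A) = mat_exp (adjoint_mat A)"
  unfolding mat_exp_def
  by (simp add: bounded_linear.suminf[OF bounded_linear_adjoint_mat summable_mat_exp]
      linear_scale[OF bounded_linear.linear[OF bounded_linear_adjoint_mat]] adjoint_mat_pow)

lemma adjoint_cscale_mat: "adjoint_mat (cscale_mat c A) = cscale_mat (cnj c) (adjoint_mat A)"
  by (simp add: vec_eq_iff adjoint_mat_def cscale_mat_def)

section \<open>Eigenvectors of self-adjoint matrices span the space\<close>

definition real_eigenvectors :: "complex ^ 'n ^ 'n \<Rightarrow> (complex ^ 'n) set" where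
  "real_eigenvectors H = {v. \<exists>\<mu>::real. H *v v = complex_of_real \<mu> *s v}"

lemma self_adjoint_inner: "self_adjoint H \<Longrightarrow> x \<bullet> (H *v y) = (H *v x) \<bullet> y"
  by (simp add: inner_eq_Re_cinner self_adjoint_cinner)

lemma self_adjoint_eigenvectors_orthogonal:
  assumes "self_adjoint H" and "H *v x = complex_of_real \<nu> *s x" and "H *v y = complex_of_real \<mu> *s y"
    and "\<nu> \<noteq> \<mu>"
  shows "cinner x y = 0"
proof -
  have "complex_of_real \<mu> * cinner x y = cinner x (H *v y)"
    by (simp add: assms cinner_smult_right)
  also have "\<dots> = cinner (H *v x) y"
    by (rule self_adjoint_cinner[OF assms(1)])
  also have "\<dots> = complex_of_real \<nu> * cinner x y"
    by (simp add: assms cinner_smult_left)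
  finally show ?thesis
    using assms(4) by simp
qed

lemma linear_coeff_zero_if_quadratic_nonneg:
  fixes a b :: real
  assumes "\<And>t. a * t + b * t\<^sup>2 \<ge> 0"
  shows "a = 0"
proof -
  have "((\<lambda>t. a * t + b * t\<^sup>2) has_real_derivative a) (at 0)"
    by (auto intro!: derivative_eq_intros)
  then show ?thesis
    by (rule DERIV_local_min[where d = 1]) (use assms in auto)
qed

text \<open>Perturbing the minimiser \<open>u\<close> of the Rayleigh quotient to \<open>u + t w\<close> shows that the residual
  \<open>H u - m u\<close> is orthogonal to \<open>V\<close>, which contains it.\<close>
lemma rayleigh_minimizer_eigenvector:
  fixes H :: "complex ^ 'n ^ 'n"
  assumes sa: "self_adjoint H" and V: "subspace V" and inv: "\<And>v. v \<in> V \<Longrightarrow> H *v v \<in> V"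
    and u: "u \<in> V" "norm u = 1"
    and min: "\<And>y. y \<in> V \<Longrightarrow> (u \<bullet> (H *v u)) * (y \<bullet> y) \<le> y \<bullet> (H *v y)"
  shows "H *v u = (u \<bullet> (H *v u)) *\<^sub>R u"
proof -
  define m where "m = u \<bullet> (H *v u)"
  define r where "r = H *v u - m *\<^sub>R u"
  have "u \<bullet> u = 1"
    using u by (simp add: power2_norm_eq_inner[symmetric])
  have "r \<in> V"
    unfolding r_def using u inv V by (intro subspace_diff subspace_scale) auto
  have "2 * (w \<bullet> r) = 0" if "w \<in> V" for w
  proof (rule linear_coeff_zero_if_quadratic_nonneg[where b = "w \<bullet> (H *v w) - m * (w \<bullet> w)"])
    fix t :: real
    have "u + t *\<^sub>R w \<in> V"
      using u that V by (intro subspace_add subspace_scale) auto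
    then have "0 \<le> (u + t *\<^sub>R w) \<bullet> (H *v (u + t *\<^sub>R w)) - m * ((u + t *\<^sub>R w) \<bullet> (u + t *\<^sub>R w))"
      using min m_def by auto
    also have "\<dots> = 2 * (w \<bullet> r) * t + (w \<bullet> (H *v w) - m * (w \<bullet> w)) * t\<^sup>2"
      using self_adjoint_inner[OF sa, of u w] \<open>u \<bullet> u = 1\<close>
      by (simp add: r_def m_def matrix_vector_right_distrib inner_add_left inner_add_right
          inner_diff_right inner_commute power2_eq_square
          linear_scale[OF matrix_vector_mul_linear] algebra_simps)
    finally show "0 \<le> 2 * (w \<bullet> r) * t + (w \<bullet> (H *v w) - m * (w \<bullet> w)) * t\<^sup>2" .
  qed
  then have "r = 0"
    using \<open>r \<in> V\<close> by (metis inner_eq_zero_iff mult_eq_0_iff zero_neq_numeral)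
  then show ?thesis
    by (simp add: r_def m_def)
qed

lemma self_adjoint_eigenvector_in_invariant_subspace:
  fixes H :: "complex ^ 'n ^ 'n"
  assumes sa: "self_adjoint H" and V: "subspace V" and inv: "\<And>v. v \<in> V \<Longrightarrow> H *v v \<in> V"
    and x: "x \<in> V" "x \<noteq> 0"
  obtains u where "u \<in> V" "u \<noteq> 0" "u \<in> real_eigenvectors H"
proof -
  define S where "S = V \<inter> sphere 0 1"
  have "compact S"
    unfolding S_def by (rule closed_Int_compact[OF closed_subspace[OF V] compact_sphere])
  moreover have "(1 / norm x) *\<^sub>R x \<in> S"
    using x V by (auto simp: S_def subspace_scale)
  moreover have "continuous_on S (\<lambda>y. y \<bullet> (H *v y))"
    by (intro continuous_intros linear_continuous_on matrix_vector_mul_bounded_linear)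
  ultimately obtain u where u: "u \<in> S" and umin: "\<And>y. y \<in> S \<Longrightarrow> u \<bullet> (H *v u) \<le> y \<bullet> (H *v y)"
    using continuous_attains_inf[of S "\<lambda>y. y \<bullet> (H *v y)"] by blast
  have "(u \<bullet> (H *v u)) * (y \<bullet> y) \<le> y \<bullet> (H *v y)" if "y \<in> V" for y
  proof (cases "y = 0")
    case False
    then have "u \<bullet> (H *v u) \<le> ((1 / norm y) *\<^sub>R y) \<bullet> (H *v ((1 / norm y) *\<^sub>R y))"
      using that V by (intro umin) (auto simp: S_def subspace_scale)
    also have "\<dots> = (y \<bullet> (H *v y)) / (y \<bullet> y)"
      by (simp add: linear_scale[OF matrix_vector_mul_linear] power2_norm_eq_inner[symmetric]
          power2_eq_square)
    finally show ?thesis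
      using False by (simp add: field_simps)
  qed simp
  then have "H *v u = complex_of_real (u \<bullet> (H *v u)) *s u"
    using rayleigh_minimizer_eigenvector[OF sa V inv] u
    by (simp add: S_def vector_scaleR_eq_of_real_smult)
  with u show ?thesis
    by (intro that[of u]) (auto simp: S_def real_eigenvectors_def)
qed

lemma complex_subspace_smult:
  assumes "subspace V" "\<And>v. v \<in> V \<Longrightarrow> \<i> *s v \<in> V" "x \<in> V"
  shows "c *s x \<in> V"
proof -
  have "c *s x = Re c *\<^sub>R x + Im c *\<^sub>R (\<i> *s x)"
    by (simp add: vec_eq_iff vector_scaleR_component scaleR_complex_eq_of_real_mult
        complex_eq_iff)
  also have "\<dots> \<in> V"
    using assms by (intro subspace_add subspace_scale) auto
  finally show ?thesis .
qed

lemma smult_real_eigenvector: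
  "H *v u = complex_of_real \<mu> *s u \<Longrightarrow> c *s u \<in> real_eigenvectors H"
  by (auto simp: real_eigenvectors_def vector_scalar_commute vector_smult_assoc mult.commute)

text \<open>Induction on the dimension: split off an eigenvector \<open>u\<close> and recurse into the
  orthogonal complement of \<open>u\<close> in \<open>V\<close>, which is again \<open>H\<close>-invariant.\<close>
lemma invariant_subspace_in_span_real_eigenvectors:
  fixes H :: "complex ^ 'n ^ 'n"
  assumes sa: "self_adjoint H"
  shows "subspace V \<Longrightarrow> (\<And>v. v \<in> V \<Longrightarrow> \<i> *s v \<in> V) \<Longrightarrow> (\<And>v. v \<in> V \<Longrightarrow> H *v v \<in> V)
    \<Longrightarrow> V \<subseteq> span (real_eigenvectors H)"
proof (induction "dim V" arbitrary: V rule: less_induct)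
  case (less V)
  show ?case
  proof (cases "V \<subseteq> {0}")
    case False
    then obtain x where "x \<in> V" "x \<noteq> 0"
      by auto
    then obtain u where uV: "u \<in> V" and "u \<noteq> 0" and "u \<in> real_eigenvectors H"
      using self_adjoint_eigenvector_in_invariant_subspace[OF sa less(2,4)] by blast
    then obtain \<mu> :: real where Hu: "H *v u = complex_of_real \<mu> *s u"
      by (auto simp: real_eigenvectors_def)
    have uu: "cinner u u \<noteq> 0"
      using \<open>u \<noteq> 0\<close> by (simp add: cinner_self)
    define V' where "V' = {v \<in> V. cinner u v = 0}"
    have "subspace V'"
      using less(2) by (auto simp: V'_def subspace_def cinner_add_right cinner_scaleR_right)
    moreover have "\<i> *s v \<in> V'" if "v \<in> V'" for v
      using that less(3) by (auto simp: V'_def cinner_smult_right)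
    moreover have "H *v v \<in> V'" if "v \<in> V'" for v
      using that less(4) self_adjoint_cinner[OF sa, of u v]
      by (auto simp: V'_def Hu cinner_smult_left)
    moreover have "dim V' < dim V"
    proof (rule dim_psubset)
      have "V' \<subset> V"
        using uV uu by (auto simp: V'_def)
      then show "span V' \<subset> span V"
        using \<open>subspace V'\<close> less(2) by (metis span_eq_iff)
    qed
    ultimately have IH: "V' \<subseteq> span (real_eigenvectors H)"
      using less(1) by blast
    show ?thesis
    proof
      fix v assume "v \<in> V"
      define c where "c = cinner u v / cinner u u"
      have "c *s u \<in> V"
        using less(2,3) uV by (rule complex_subspace_smult)
      then have "v - c *s u \<in> V'"
        using less(2) \<open>v \<in> V\<close> uu
        by (simp add: V'_def subspace_diff cinner_diff_right cinner_smult_right c_def)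
      moreover have "c *s u \<in> real_eigenvectors H"
        by (rule smult_real_eigenvector[OF Hu])
      ultimately have "(v - c *s u) + c *s u \<in> span (real_eigenvectors H)"
        using IH by (blast intro: span_add span_base)
      then show "v \<in> span (real_eigenvectors H)"
        by simp
    qed
  qed (use span_zero in auto)
qed

lemma span_real_eigenvectors: "self_adjoint H \<Longrightarrow> span (real_eigenvectors H) = UNIV"
  using invariant_subspace_in_span_real_eigenvectors[of H UNIV] by auto

lemma self_adjoint_eigenvector_induct [consumes 1, case_names zero add scale eigenvector]:
  assumes "self_adjoint H"
    and "P 0" and "\<And>x y. P x \<Longrightarrow> P y \<Longrightarrow> P (x + y)" and "\<And>c x. P x \<Longrightarrow> P (c *\<^sub>R x)"
    and "\<And>v \<mu>. H *v v = complex_of_real \<mu> *s v \<Longrightarrow> P v"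
  shows "P x"
proof -
  have "x \<in> span (real_eigenvectors H)"
    using span_real_eigenvectors[OF assms(1)] by auto
  then show ?thesis
  proof (rule span_induct)
    show "subspace (Collect P)"
      using assms(2-4) by (auto simp: subspace_def)
  qed (use assms(5) in \<open>auto simp: real_eigenvectors_def\<close>)
qed

section \<open>The filter operator on eigenvectors of \<open>H\<close>\<close>

definition filter_fourier :: "(real \<Rightarrow> real) \<Rightarrow> real \<Rightarrow> complex" where
  "filter_fourier W l = (\<integral>t. complex_of_real (W t) * exp (\<i> * complex_of_real (l * t)) \<partial>lborel)"

lemma integrable_filter_fourier:
  assumes "integrable lborel W"
  shows "integrable lborel (\<lambda>t. complex_of_real (W t) * exp (\<i> * complex_of_real (l * t)))"
proof (rule Bochner_Integration.integrable_bound[OF assms])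
  have [measurable]: "W \<in> borel_measurable lborel"
    using assms by measurable
  show "(\<lambda>t. complex_of_real (W t) * exp (\<i> * complex_of_real (l * t))) \<in> borel_measurable lborel"
    by measurable
qed (simp add: norm_mult)

lemma integral_odd_eq_0:
  fixes W :: "real \<Rightarrow> real"
  assumes "integrable lborel W" and odd: "\<And>t. t \<noteq> 0 \<Longrightarrow> W (- t) = - W t"
  shows "(\<integral>t. W t \<partial>lborel) = 0"
proof -
  have [measurable]: "W \<in> borel_measurable lborel"
    using assms by measurable
  have "(\<integral>t. W t \<partial>lborel) = \<bar>-1\<bar> *\<^sub>R (\<integral>t. W (0 + (-1) * t) \<partial>lborel)"
    by (rule lborel_integral_real_affine) simp
  also have "(\<integral>t. W (0 + (-1) * t) \<partial>lborel) = (\<integral>t. - W t \<partial>lborel)"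
  proof (rule integral_cong_AE)
    show "AE t in lborel. W (0 + (-1) * t) = - W t"
      using AE_lborel_singleton[of "0::real"] by eventually_elim (simp add: odd)
  qed measurable
  finally show ?thesis
    by simp
qed

lemma filter_fourier_0:
  assumes "filter_function K c0 \<Delta> W"
  shows "filter_fourier W 0 = 0"
  using assms integral_odd_eq_0[of W] by (simp add: filter_function_def filter_fourier_def)

lemma filter_fourier_gap:
  assumes "filter_function K c0 \<Delta> W" "\<Delta> \<le> \<bar>l\<bar>"
  shows "filter_fourier W l = \<i> / complex_of_real l"
  using assms unfolding filter_function_def filter_fourier_def by blast

text \<open>In spectral terms, \<open>filtered_evolution H W a w\<close> is \<open>\<hat>W(a + H) w\<close>.\<close>
definition filtered_evolution ::
    "complex ^ 'n ^ 'n \<Rightarrow> (real \<Rightarrow> real) \<Rightarrow> real \<Rightarrow> complex ^ 'n \<Rightarrow> complex ^ 'n" where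
  "filtered_evolution H W a w = (\<integral>t. W t *\<^sub>R (exp (\<i> * complex_of_real (a * t)) *s
      (mat_exp (cscale_mat (\<i> * complex_of_real t) H) *v w)) \<partial>lborel)"

lemma filtered_evolution_integrand_eigenvector:
  assumes "H *v w = complex_of_real \<mu> *s w"
  shows "W t *\<^sub>R (exp (\<i> * complex_of_real (a * t)) *s (mat_exp (cscale_mat (\<i> * complex_of_real t) H) *v w))
    = (complex_of_real (W t) * exp (\<i> * complex_of_real ((a + \<mu>) * t))) *s w"
proof -
  have "exp (\<i> * complex_of_real (a * t)) * exp (\<i> * complex_of_real t * complex_of_real \<mu>)
      = exp (\<i> * complex_of_real ((a + \<mu>) * t))"
    by (simp add: exp_add[symmetric] algebra_simps)
  then show ?thesis
    by (simp add: mat_exp_cscale_eigenvector[OF assms] vector_smult_assoc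
        vector_scaleR_eq_of_real_smult mult.assoc)
qed

lemma integrable_filtered_evolution:
  assumes "self_adjoint H" and W: "integrable lborel W"
  shows "integrable lborel (\<lambda>t. W t *\<^sub>R (exp (\<i> * complex_of_real (a * t)) *s
      (mat_exp (cscale_mat (\<i> * complex_of_real t) H) *v w)))"
  using assms(1)
proof (induction w arbitrary: a rule: self_adjoint_eigenvector_induct)
  case (eigenvector v \<mu>)
  show ?case
    unfolding filtered_evolution_integrand_eigenvector[OF eigenvector]
    by (rule integrable_bounded_linear[OF bounded_bilinear.bounded_linear_left[OF
          bounded_bilinear_vector_smult] integrable_filter_fourier[OF W]])
next
  case (scale c x)
  then show ?case
    using integrable_scaleR_right[OF scale.IH, of c]
    by (simp add: linear_scale[OF matrix_vector_mul_linear] vector_smult_scaleR_commute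
        scaleR_left_commute[of "W _"] mult.commute[of "W _"])
qed (simp_all add: matrix_vector_right_distrib algebra_simps)

lemma filtered_evolution_add:
  assumes "self_adjoint H" "integrable lborel W"
  shows "filtered_evolution H W a (x + y) = filtered_evolution H W a x + filtered_evolution H W a y"
  unfolding filtered_evolution_def matrix_vector_right_distrib vector_add_ldistrib scaleR_add_right
  by (rule Bochner_Integration.integral_add[OF integrable_filtered_evolution[OF assms]
        integrable_filtered_evolution[OF assms]])

lemma filtered_evolution_scaleR:
  "filtered_evolution H W a (c *\<^sub>R x) = c *\<^sub>R filtered_evolution H W a x"
  unfolding filtered_evolution_def linear_scale[OF matrix_vector_mul_linear]
    vector_smult_scaleR_commute scaleR_left_commute[of "W _"]
  by (rule integral_scaleR_right)

lemma filtered_evolution_diff: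
  assumes "self_adjoint H" "integrable lborel W"
  shows "filtered_evolution H W a (x - y) = filtered_evolution H W a x - filtered_evolution H W a y"
  using filtered_evolution_add[OF assms, of a x "(-1) *\<^sub>R y"] filtered_evolution_scaleR[of H W a "-1" y]
  by simp

lemma filtered_evolution_eigenvector:
  assumes W: "integrable lborel W" and "H *v w = complex_of_real \<mu> *s w"
  shows "filtered_evolution H W a w = filter_fourier W (a + \<mu>) *s w"
  unfolding filtered_evolution_def filtered_evolution_integrand_eigenvector[OF assms(2)]
    filter_fourier_def
  by (rule integral_bounded_linear[OF bounded_bilinear.bounded_linear_left[OF
        bounded_bilinear_vector_smult] integrable_filter_fourier[OF W]])

lemma S_filter_integrand_eigenvector:
  assumes "H *v v = complex_of_real \<mu> *s v"
  shows "(W t *\<^sub>R (mat_exp (cscale_mat (\<i> * complex_of_real t) H) ** A **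
       mat_exp (cscale_mat (- \<i> * complex_of_real t) H))) *v v
    = W t *\<^sub>R (exp (\<i> * complex_of_real (- \<mu> * t)) *s
       (mat_exp (cscale_mat (\<i> * complex_of_real t) H) *v (A *v v)))"
  by (simp add: linear_scale[OF bounded_linear.linear[OF bounded_linear_matrix_vector_mult_left]]
      matrix_vector_mul_assoc[symmetric] mat_exp_cscale_eigenvector[OF assms] vector_scalar_commute
      mult.commute[of "complex_of_real \<mu>"] mult.assoc)

lemma matrix_vector_mult_axis: "(A *v axis j 1) $ i = A $ i $ j"
  for A :: "complex ^ 'n ^ 'm"
  by (simp add: matrix_vector_mult_def axis_def if_distrib cong: if_cong)

lemma integrable_matrix_by_columns:
  fixes F :: "'a \<Rightarrow> complex ^ 'n ^ 'm"
  assumes "\<And>v. integrable M (\<lambda>t. F t *v v)"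
  shows "integrable M F"
proof -
  let ?column = "\<lambda>j (x::complex ^ 'm). \<chi> i k. if k = j then x $ i else (0::complex)"
  have column: "bounded_linear (?column j)" for j
    unfolding linear_conv_bounded_linear[symmetric]
    by (rule linearI) (simp_all add: vec_eq_iff vector_scaleR_component)
  have "integrable M (\<lambda>t. \<Sum>j\<in>UNIV. ?column j (F t *v axis j 1))"
    by (rule Bochner_Integration.integrable_sum) (rule integrable_bounded_linear[OF column assms])
  moreover have "(\<Sum>j\<in>UNIV. ?column j (F t *v axis j 1)) = F t" for t
    by (simp add: vec_eq_iff sum_component matrix_vector_mult_axis if_distrib cong: if_cong)
  ultimately show ?thesis
    by simp
qed

lemma integrable_S_filter:
  assumes sa: "self_adjoint H" and W: "integrable lborel W"
  shows "integrable lborel (\<lambda>t. W t *\<^sub>R (mat_exp (cscale_mat (\<i> * complex_of_real t) H) ** A **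
       mat_exp (cscale_mat (- \<i> * complex_of_real t) H)))"
proof (rule integrable_matrix_by_columns)
  fix v
  show "integrable lborel (\<lambda>t. (W t *\<^sub>R (mat_exp (cscale_mat (\<i> * complex_of_real t) H) ** A **
       mat_exp (cscale_mat (- \<i> * complex_of_real t) H))) *v v)"
    using sa
  proof (induction v rule: self_adjoint_eigenvector_induct)
    case (eigenvector v \<mu>)
    show ?case
      unfolding S_filter_integrand_eigenvector[OF eigenvector]
      by (rule integrable_filtered_evolution[OF sa W])
  qed (simp_all add: matrix_vector_right_distrib linear_scale[OF matrix_vector_mul_linear])
qed

lemma S_filter_eigenvector:
  assumes sa: "self_adjoint H" and W: "integrable lborel W"
    and v: "H *v v = complex_of_real \<mu> *s v"
  shows "S_filter W H A *v v = filtered_evolution H W (- \<mu>) (A *v v)"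
  unfolding S_filter_def filtered_evolution_def
    integral_bounded_linear[OF bounded_linear_matrix_vector_mult_left integrable_S_filter[OF sa W],
      symmetric]
  by (simp only: S_filter_integrand_eigenvector[OF v])

text \<open>Each integrand is self-adjoint because \<open>(e\<^sup>i\<^sup>t\<^sup>H)\<^sup>* = e\<^sup>-\<^sup>i\<^sup>t\<^sup>H\<close>.\<close>
lemma self_adjoint_S_filter:
  assumes sa: "self_adjoint H" and saA: "self_adjoint A" and W: "integrable lborel W"
  shows "self_adjoint (S_filter W H A)"
proof -
  have "adjoint_mat (mat_exp (cscale_mat c H)) = mat_exp (cscale_mat (cnj c) H)" for c
    using sa by (simp add: adjoint_mat_exp adjoint_cscale_mat self_adjoint_def)
  then have "adjoint_mat (W t *\<^sub>R (mat_exp (cscale_mat (\<i> * complex_of_real t) H) ** A **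
       mat_exp (cscale_mat (- \<i> * complex_of_real t) H)))
     = W t *\<^sub>R (mat_exp (cscale_mat (\<i> * complex_of_real t) H) ** A **
       mat_exp (cscale_mat (- \<i> * complex_of_real t) H))" for t
    using saA by (simp add: linear_scale[OF bounded_linear.linear[OF bounded_linear_adjoint_mat]]
        adjoint_mat_mult matrix_mul_assoc self_adjoint_def)
  then show ?thesis
    unfolding self_adjoint_def S_filter_def
      integral_bounded_linear[OF bounded_linear_adjoint_mat integrable_S_filter[OF sa W], symmetric]
    by simp
qed

section \<open>The filter operator at a gapped ground state\<close>

lemma normalized_ground_state_cinner: "normalized_ground_state H \<psi> \<Longrightarrow> cinner \<psi> \<psi> = 1"
  by (simp add: normalized_ground_state_def cnorm_eq_norm cinner_self)

lemma unique_ground_state_gap_eigenvalue: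
  assumes "unique_ground_state_gap H E \<Delta>" "H *v w = complex_of_real \<mu> *s w" "w \<noteq> 0" "\<mu> \<noteq> E"
  shows "E + \<Delta> \<le> \<mu>"
proof -
  have "is_eigenvalue H (complex_of_real \<mu>)"
    using assms(2,3) unfolding is_eigenvalue_def by blast
  then show ?thesis
    using assms(1,4) unfolding unique_ground_state_gap_def by fastforce
qed

lemma ground_state_eigenvector:
  assumes gap: "unique_ground_state_gap H E \<Delta>" and gs: "normalized_ground_state H \<psi>"
    and "\<Delta> > 0"
  shows "H *v \<psi> = complex_of_real E *s \<psi>"
proof -
  obtain E' where E': "H *v \<psi> = complex_of_real E' *s \<psi>"
    and lowest: "\<And>\<mu>. is_eigenvalue H \<mu> \<Longrightarrow> E' \<le> Re \<mu>"
    using gs unfolding normalized_ground_state_def by blast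
  have "\<psi> \<noteq> 0"
    using normalized_ground_state_cinner[OF gs] by auto
  have "E' \<le> E"
    using lowest gap unfolding unique_ground_state_gap_def by fastforce
  then have "E' = E"
    using unique_ground_state_gap_eigenvalue[OF gap E' \<open>\<psi> \<noteq> 0\<close>] \<open>\<Delta> > 0\<close> by fastforce
  then show ?thesis
    using E' by simp
qed

lemma ground_state_unique:
  assumes gap: "unique_ground_state_gap H E \<Delta>" and gs: "normalized_ground_state H \<psi>"
    and "\<Delta> > 0" and w: "H *v w = complex_of_real E *s w"
  shows "w = cinner \<psi> w *s \<psi>"
proof -
  obtain \<phi> where \<phi>: "\<And>v. H *v v = complex_of_real E *s v \<Longrightarrow> \<exists>c. v = c *s \<phi>"
    using gap unfolding unique_ground_state_gap_def by blast
  obtain c1 c2 where c1: "w = c1 *s \<phi>" and c2: "\<psi> = c2 *s \<phi>"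
    using \<phi>[OF w] \<phi>[OF ground_state_eigenvector[OF gap gs \<open>\<Delta> > 0\<close>]] by blast
  have pp: "cinner \<psi> \<psi> = 1"
    by (rule normalized_ground_state_cinner[OF gs])
  then have "c2 \<noteq> 0"
    using c2 by auto
  then have "w = (c1 / c2) *s \<psi>"
    using c1 c2 by (simp add: vector_smult_assoc)
  then show ?thesis
    using pp by (simp add: cinner_smult_right)
qed

text \<open>The gap gives \<open>\<hat>W(\<mu> - E) = \<i>/(\<mu> - E)\<close>, which cancels the factor \<open>\<mu> - E\<close>.\<close>
lemma filtered_evolution_excited_eigenvector:
  assumes W: "filter_function K c0 \<Delta> W" and gap: "unique_ground_state_gap H E \<Delta>"
    and v: "H *v v = complex_of_real \<mu> *s v" "v \<noteq> 0" and "\<mu> \<noteq> E"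
  shows "filtered_evolution H W (- E) (H *v v - complex_of_real E *s v) = \<i> *s v"
proof -
  have Wi: "integrable lborel W"
    using W by (simp add: filter_function_def)
  have "E + \<Delta> \<le> \<mu>"
    using unique_ground_state_gap_eigenvalue[OF gap v \<open>\<mu> \<noteq> E\<close>] .
  then have ft: "filter_fourier W (- E + \<mu>) = \<i> / complex_of_real (- E + \<mu>)"
    by (intro filter_fourier_gap[OF W]) simp
  have "H *v v - complex_of_real E *s v = (\<mu> - E) *\<^sub>R v"
    using v by (simp add: vector_scaleR_eq_of_real_smult vec_eq_iff algebra_simps)
  then have "filtered_evolution H W (- E) (H *v v - complex_of_real E *s v)
      = (\<mu> - E) *\<^sub>R (filter_fourier W (- E + \<mu>) *s v)"
    by (simp only: filtered_evolution_scaleR filtered_evolution_eigenvector[OF Wi v(1)])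
  also have "\<dots> = \<i> *s v"
    using \<open>\<mu> \<noteq> E\<close> unfolding ft
    by (simp add: vector_scaleR_eq_of_real_smult vector_smult_assoc field_simps)
  finally show ?thesis .
qed

lemma filtered_evolution_reduced_resolvent:
  fixes H :: "complex ^ 'n ^ 'n"
  assumes sa: "self_adjoint H" and W: "filter_function K c0 \<Delta> W"
    and gap: "unique_ground_state_gap H E \<Delta>" and gs: "normalized_ground_state H \<psi>"
    and "\<Delta> > 0"
  shows "filtered_evolution H W (- E) (H *v w - complex_of_real E *s w) = \<i> *s (w - cinner \<psi> w *s \<psi>)"
  using sa
proof (induction w rule: self_adjoint_eigenvector_induct)
  have Wi: "integrable lborel W"
    using W by (simp add: filter_function_def)
  note Hpsi = ground_state_eigenvector[OF gap gs \<open>\<Delta> > 0\<close>]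
  {
    case zero
    show ?case
      by (simp add: filtered_evolution_def)
  next
    case (add x y)
    have split: "H *v (x + y) - complex_of_real E *s (x + y)
        = (H *v x - complex_of_real E *s x) + (H *v y - complex_of_real E *s y)"
      by (simp add: matrix_vector_right_distrib vector_add_ldistrib)
    show ?case
      unfolding split filtered_evolution_add[OF sa Wi] add(1,2)
      by (simp add: vec_eq_iff cinner_add_right algebra_simps)
  next
    case (scale c x)
    have split: "H *v (c *\<^sub>R x) - complex_of_real E *s (c *\<^sub>R x)
        = c *\<^sub>R (H *v x - complex_of_real E *s x)"
      by (simp add: linear_scale[OF matrix_vector_mul_linear] vector_smult_scaleR_commute
          scaleR_right_diff_distrib)
    show ?case
      unfolding split filtered_evolution_scaleR scale
      by (simp add: vec_eq_iff cinner_scaleR_right vector_scaleR_component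
          scaleR_complex_eq_of_real_mult algebra_simps)
  next
    case (eigenvector v \<mu>)
    consider "\<mu> = E" | "v = 0" | "\<mu> \<noteq> E" "v \<noteq> 0"
      by blast
    then show ?case
    proof cases
      case 1
      then have "v = cinner \<psi> v *s \<psi>"
        using ground_state_unique[OF gap gs \<open>\<Delta> > 0\<close>] eigenvector by simp
      then show ?thesis
        using 1 eigenvector by (simp add: filtered_evolution_def)
    next
      case 3
      then show ?thesis
        using filtered_evolution_excited_eigenvector[OF W gap eigenvector]
          self_adjoint_eigenvectors_orthogonal[OF sa Hpsi eigenvector]
        by simp
    qed (simp add: filtered_evolution_def)
  }
qed

lemma S_filter_ground_state:
  fixes H :: "complex ^ 'n ^ 'n"
  assumes sa: "self_adjoint H" and W: "filter_function K c0 \<Delta> W"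
    and gap: "unique_ground_state_gap H E \<Delta>" and gs: "normalized_ground_state H \<psi>"
    and "\<Delta> > 0"
    and A: "A *v \<psi> = e *s \<psi> - (H *v \<psi>' - complex_of_real E *s \<psi>')"
    and parallel: "cinner \<psi> \<psi>' = 0"
  shows "cscale_mat \<i> (S_filter W H A) *v \<psi> = \<psi>'"
proof -
  have Wi: "integrable lborel W"
    using W by (simp add: filter_function_def)
  note Hpsi = ground_state_eigenvector[OF gap gs \<open>\<Delta> > 0\<close>]
  have "S_filter W H A *v \<psi> = filtered_evolution H W (- E) (A *v \<psi>)"
    by (rule S_filter_eigenvector[OF sa Wi Hpsi])
  also have "\<dots> = filtered_evolution H W (- E) (e *s \<psi>)
      - filtered_evolution H W (- E) (H *v \<psi>' - complex_of_real E *s \<psi>')"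
    unfolding A by (rule filtered_evolution_diff[OF sa Wi])
  also have "filtered_evolution H W (- E) (e *s \<psi>) = 0"
    using filtered_evolution_eigenvector[OF Wi, of H "e *s \<psi>" E] filter_fourier_0[OF W] Hpsi
    by (simp add: vector_scalar_commute vector_smult_assoc mult.commute)
  also have "filtered_evolution H W (- E) (H *v \<psi>' - complex_of_real E *s \<psi>') = \<i> *s \<psi>'"
    using filtered_evolution_reduced_resolvent[OF sa W gap gs \<open>\<Delta> > 0\<close>] parallel by simp
  finally show ?thesis
    by (simp add: cscale_mat_mult_vector vec_eq_iff)
qed

section \<open>Differential equations on an interval\<close>

lemma has_vector_derivative_unique_on_interval:
  assumes "a < b" "\<theta> \<in> {a..b}"
    and "(f has_vector_derivative f') (at \<theta> within {a..b})"
    and "(g has_vector_derivative g') (at \<theta> within {a..b})"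
    and "\<And>x. x \<in> {a..b} \<Longrightarrow> f x = g x"
  shows "f' = g'"
proof -
  have "(f has_vector_derivative g') (at \<theta> within {a..b})"
    by (rule has_vector_derivative_transform_within[OF assms(4) zero_less_one assms(2)])
      (simp add: assms(5))
  then show ?thesis
    using vector_derivative_unique_within_closed_interval[of a b \<theta> f f' g'] assms(1-3)
    by (simp add: cbox_interval)
qed

lemma self_adjoint_derivative:
  assumes "a < b" "\<theta> \<in> {a..b}" and sa: "\<And>x. x \<in> {a..b} \<Longrightarrow> self_adjoint (H x)"
    and H: "(H has_vector_derivative H') (at \<theta> within {a..b})"
  shows "self_adjoint H'"
proof -
  have "((\<lambda>x. adjoint_mat (H x)) has_vector_derivative adjoint_mat H') (at \<theta> within {a..b})"
    by (rule bounded_linear.has_vector_derivative[OF bounded_linear_adjoint_mat H])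
  then have "adjoint_mat H' = H'"
    by (rule has_vector_derivative_unique_on_interval[OF assms(1,2) _ H])
      (use sa in \<open>simp add: self_adjoint_def\<close>)
  then show ?thesis
    by (simp add: self_adjoint_def)
qed

text \<open>\<open>E\<close> is not assumed differentiable; the derivative of \<open>\<langle>\<psi>, H \<psi>\<rangle> = E\<close> plays its role.\<close>
lemma eigenvector_equation_derivative:
  fixes H :: "real \<Rightarrow> complex ^ 'n ^ 'n" and \<psi> :: "real \<Rightarrow> complex ^ 'n"
  assumes "a < b" "\<theta> \<in> {a..b}"
    and eig: "\<And>x. x \<in> {a..b} \<Longrightarrow> H x *v \<psi> x = complex_of_real (E x) *s \<psi> x"
    and normalized: "\<And>x. x \<in> {a..b} \<Longrightarrow> cinner (\<psi> x) (\<psi> x) = 1"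
    and H: "(H has_vector_derivative H') (at \<theta> within {a..b})"
    and \<psi>: "(\<psi> has_vector_derivative \<psi>') (at \<theta> within {a..b})"
  obtains e where "H' *v \<psi> \<theta> = e *s \<psi> \<theta> - (H \<theta> *v \<psi>' - complex_of_real (E \<theta>) *s \<psi>')"
proof -
  define c where "c x = cinner (\<psi> x) (H x *v \<psi> x)" for x
  have c_eq: "c x = complex_of_real (E x)" if "x \<in> {a..b}" for x
    using eig[OF that] normalized[OF that] by (simp add: c_def cinner_smult_right)
  have H\<psi>: "((\<lambda>x. H x *v \<psi> x) has_vector_derivative (H \<theta> *v \<psi>' + H' *v \<psi> \<theta>))
      (at \<theta> within {a..b})"
    by (rule bounded_bilinear.has_vector_derivative[OF bounded_bilinear_matrix_vector_mult H \<psi>])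
  obtain c' where "(c has_vector_derivative c') (at \<theta> within {a..b})"
    unfolding c_def using bounded_bilinear.has_vector_derivative[OF bounded_bilinear_cinner \<psi> H\<psi>]
    by blast
  then have c\<psi>: "((\<lambda>x. c x *s \<psi> x) has_vector_derivative (c \<theta> *s \<psi>' + c' *s \<psi> \<theta>))
      (at \<theta> within {a..b})"
    by (rule bounded_bilinear.has_vector_derivative[OF bounded_bilinear_vector_smult _ \<psi>])
  have "H \<theta> *v \<psi>' + H' *v \<psi> \<theta> = c \<theta> *s \<psi>' + c' *s \<psi> \<theta>"
    by (rule has_vector_derivative_unique_on_interval[OF assms(1,2) H\<psi> c\<psi>])
      (simp add: eig c_eq)
  then show ?thesis
    using c_eq[OF assms(2)] by (intro that[of c']) (simp add: algebra_simps)
qed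

text \<open>For a skew generator the squared distance of two solutions is constant.\<close>
lemma skew_linear_ode_unique:
  fixes x y :: "real \<Rightarrow> 'a::real_inner"
  assumes "\<theta> \<in> {a..b}"
    and lin: "\<And>t. t \<in> {a..b} \<Longrightarrow> linear (A t)"
    and skew: "\<And>t v. t \<in> {a..b} \<Longrightarrow> v \<bullet> A t v = 0"
    and x: "\<And>t. t \<in> {a..b} \<Longrightarrow> (x has_vector_derivative A t (x t)) (at t within {a..b})"
    and y: "\<And>t. t \<in> {a..b} \<Longrightarrow> (y has_vector_derivative A t (y t)) (at t within {a..b})"
    and "x a = y a"
  shows "x \<theta> = y \<theta>"
proof -
  define d where "d t = x t - y t" for t
  have d: "(d has_vector_derivative A t (d t)) (at t within {a..b})" if "t \<in> {a..b}" for t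
    using has_vector_derivative_diff[OF x[OF that] y[OF that]]
    by (simp add: d_def[abs_def] linear_diff[OF lin[OF that]])
  have "((\<lambda>t. d t \<bullet> d t) has_real_derivative 0) (at t within {a..b})" if "t \<in> {a..b}" for t
    using bounded_bilinear.has_vector_derivative[OF bounded_bilinear_inner d[OF that] d[OF that]]
      skew[OF that, of "d t"]
    by (simp add: has_real_derivative_iff_has_vector_derivative inner_commute)
  then obtain k where "\<And>t. t \<in> {a..b} \<Longrightarrow> d t \<bullet> d t = k"
    using has_field_derivative_zero_constant[of "{a..b}" "\<lambda>t. d t \<bullet> d t"] by blast
  moreover have "a \<in> {a..b}"
    using assms(1) by simp
  ultimately have "d \<theta> \<bullet> d \<theta> = d a \<bullet> d a"
    using assms(1) by metis
  then show ?thesis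
    using \<open>x a = y a\<close> by (simp add: d_def)
qed

lemma inner_i_self_adjoint_eq_0: "self_adjoint S \<Longrightarrow> v \<bullet> (cscale_mat \<i> S *v v) = 0"
  using self_adjoint_cinner[of S v v] cinner_commute[of v "S *v v"]
  by (simp add: inner_eq_Re_cinner cscale_mat_mult_vector cinner_smult_right complex_eq_iff)

lemma ground_state_derivative_eq_S_filter:
  fixes H :: "real \<Rightarrow> complex ^ 'n ^ 'n" and \<psi> :: "real \<Rightarrow> complex ^ 'n"
  assumes "a < b" "\<theta> \<in> {a..b}" and W: "filter_function K c0 \<Delta> W" and "\<Delta> > 0"
    and sa: "\<And>x. x \<in> {a..b} \<Longrightarrow> self_adjoint (H x)"
    and gap: "\<And>x. x \<in> {a..b} \<Longrightarrow> unique_ground_state_gap (H x) (E x) \<Delta>"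
    and gs: "\<And>x. x \<in> {a..b} \<Longrightarrow> normalized_ground_state (H x) (\<psi> x)"
    and H: "(H has_vector_derivative H') (at \<theta> within {a..b})"
    and \<psi>: "(\<psi> has_vector_derivative \<psi>') (at \<theta> within {a..b})"
    and parallel: "cinner (\<psi> \<theta>) \<psi>' = 0"
  shows "\<psi>' = cscale_mat \<i> (S_filter W (H \<theta>) H') *v \<psi> \<theta>"
proof -
  have "H x *v \<psi> x = complex_of_real (E x) *s \<psi> x" if "x \<in> {a..b}" for x
    by (rule ground_state_eigenvector[OF gap[OF that] gs[OF that] \<open>\<Delta> > 0\<close>])
  moreover have "cinner (\<psi> x) (\<psi> x) = 1" if "x \<in> {a..b}" for x
    by (rule normalized_ground_state_cinner[OF gs[OF that]])
  ultimately obtain e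
    where "H' *v \<psi> \<theta> = e *s \<psi> \<theta> - (H \<theta> *v \<psi>' - complex_of_real (E \<theta>) *s \<psi>')"
    using eigenvector_equation_derivative[OF assms(1,2) _ _ H \<psi>] by metis
  from S_filter_ground_state[OF sa[OF \<open>\<theta> \<in> {a..b}\<close>] W gap[OF \<open>\<theta> \<in> {a..b}\<close>]
      gs[OF \<open>\<theta> \<in> {a..b}\<close>] \<open>\<Delta> > 0\<close> this parallel]
  show ?thesis
    by simp
qed

theorem mainTheorem3:
  fixes H H' :: "real \<Rightarrow> complex ^ 'n ^ 'n"
    and \<Psi>0 \<Psi>0' :: "real \<Rightarrow> complex ^ 'n"
    and U :: "real \<Rightarrow> complex ^ 'n ^ 'n"
    and E0 :: "real \<Rightarrow> real"
    and W :: "real \<Rightarrow> real"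
    and s \<Delta> K c0 :: real
  assumes s: "s \<ge> 0"
    and \<Delta>: "\<Delta> > 0"
    and W: "filter_function K c0 \<Delta> W"
    and sa: "\<forall>\<theta>\<in>{0..s}. self_adjoint (H \<theta>)"
    and H_deriv: "\<forall>\<theta>\<in>{0..s}. (H has_vector_derivative H' \<theta>) (at \<theta> within {0..s})"
    and gap: "\<forall>\<theta>\<in>{0..s}. unique_ground_state_gap (H \<theta>) (E0 \<theta>) \<Delta>"
    and gs: "\<forall>\<theta>\<in>{0..s}. normalized_ground_state (H \<theta>) (\<Psi>0 \<theta>)"
    and \<Psi>_deriv: "\<forall>\<theta>\<in>{0..s}. (\<Psi>0 has_vector_derivative \<Psi>0' \<theta>) (at \<theta> within {0..s})"
    and parallel: "\<forall>\<theta>\<in>{0..s}. cinner (\<Psi>0 \<theta>) (\<Psi>0' \<theta>) = 0"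
    and U0: "U 0 = mat 1"
    and U_ode: "\<forall>\<theta>\<in>{0..s}. (U has_vector_derivative
                 (cscale_mat \<i> (S_filter W (H \<theta>) (H' \<theta>)) ** U \<theta>)) (at \<theta> within {0..s})"
  shows "\<forall>\<theta>\<in>{0..s}. \<Psi>0 \<theta> = U \<theta> *v \<Psi>0 0"
proof (cases "s = 0")
  case True
  then show ?thesis
    using U0 by (simp add: matrix_vector_mul_lid)
next
  case False
  with s have "0 < s"
    by simp
  define M where "M \<theta> = cscale_mat \<i> (S_filter W (H \<theta>) (H' \<theta>))" for \<theta>
  have velocity: "\<Psi>0' \<theta> = M \<theta> *v \<Psi>0 \<theta>" if "\<theta> \<in> {0..s}" for \<theta>
    unfolding M_def using that sa gap gs H_deriv \<Psi>_deriv parallel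
    by (intro ground_state_derivative_eq_S_filter[OF \<open>0 < s\<close> that W \<Delta>]) auto
  have skew: "v \<bullet> (M \<theta> *v v) = 0" if "\<theta> \<in> {0..s}" for \<theta> v
    unfolding M_def using W sa that
    by (intro inner_i_self_adjoint_eq_0 self_adjoint_S_filter
        self_adjoint_derivative[OF \<open>0 < s\<close> that _ H_deriv[rule_format, OF that]])
      (auto simp: filter_function_def)
  show ?thesis
  proof
    fix \<theta> assume "\<theta> \<in> {0..s}"
    show "\<Psi>0 \<theta> = U \<theta> *v \<Psi>0 0"
    proof (rule skew_linear_ode_unique[OF \<open>\<theta> \<in> {0..s}\<close>, where A = "\<lambda>\<theta>. (*v) (M \<theta>)"])
      fix t assume t: "t \<in> {0..s}"
      show "(\<Psi>0 has_vector_derivative M t *v \<Psi>0 t) (at t within {0..s})"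
        using \<Psi>_deriv[rule_format, OF t] unfolding velocity[OF t] .
      show "((\<lambda>t. U t *v \<Psi>0 0) has_vector_derivative M t *v (U t *v \<Psi>0 0)) (at t within {0..s})"
        using bounded_linear.has_vector_derivative[OF bounded_linear_matrix_vector_mult_left
            U_ode[rule_format, OF t, folded M_def]]
        by (simp add: matrix_vector_mul_assoc)
    qed (use skew U0 in \<open>simp_all add: matrix_vector_mul_lid\<close>)
  qed
qed

end
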